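(* Let $p,q,s$ be complex numbers with $p\neq0$, $q\neq 0$, $s^2\neq -1$. Let $\tilde A$ be the unital complex algebra generated by $\xi,\eta,\zeta,U,V,Z$ subject to the relations $$\zeta\xi=q^2\xi\zeta,\quad \eta\zeta=q^2\zeta\eta,\quad \xi U=pU\xi,\quad V\xi=p\xi V,\quad \eta V=pV\eta,\quad U\eta=p\eta U,$$ $$UV=VU,\quad U\zeta=\zeta U,\quad V\zeta=\zeta V,$$ $$\xi\eta=(\zeta-1)(\zeta+s^2)+UV,\qquad \eta\xi=(q^2\zeta-1)(q^2\zeta+s^2)+UV,$$ together with the requirements that $Z$ is central and $Z^2=UV$. Let $$\tilde e=\frac{1}{2(1+s^2)}\begin{pmatrix}1+s^2+2Z&0&1-s^2-2\zeta&2\xi\\ 0&1+s^2+2Z&-2\eta&s^2-1+2q^2\zeta\\ 1-s^2-2\zeta&2\xi&1+s^2-2Z&0\\ -2\eta&s^2-1+2q^2\zeta&0&1+s^2-2Z\end{pmatrix}\in\mathrm{Mat}_4(\tilde A).$$ Then $\tilde e^2=\tilde e$. Moreover, if $q^2,s^2$ are real, $|p|=1$, and $\tilde A$ carries the involution with $\zeta^*=\zeta$, $\xi^*=-\eta$, $U^*=V$, $Z^*=Z$, then $\tilde e^*=\tilde e$ (entrywise involution combined with transposition). *)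

theory Defs
  imports Complex_Main "Jordan_Normal_Form.Matrix"
begin

text \<open>A unital complex algebra: a unital ring 'a together with a unital ring
  homomorphism c from the complex numbers into the centre of 'a
  (c z is the scalar z times the unit).\<close>
definition complex_algebra :: "(complex \<Rightarrow> 'a::ring_1) \<Rightarrow> bool" where
  "complex_algebra c \<longleftrightarrow>
     (\<forall>z w. c (z + w) = c z + c w) \<and> (\<forall>z w. c (z * w) = c z * c w) \<and>
     c 1 = 1 \<and> (\<forall>z x. c z * x = x * c z)"

definition algebra_involution :: "(complex \<Rightarrow> 'a::ring_1) \<Rightarrow> ('a \<Rightarrow> 'a) \<Rightarrow> bool" where
  "algebra_involution c st \<longleftrightarrow>
     (\<forall>x y. st (x + y) = st x + st y) \<and> (\<forall>x y. st (x * y) = st y * st x) \<and>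
     (\<forall>x. st (st x) = x) \<and> (\<forall>z x. st (c z * x) = c (cnj z) * st x)"

definition mat_star :: "('a \<Rightarrow> 'a) \<Rightarrow> 'a mat \<Rightarrow> 'a mat" where
  "mat_star st M = transpose_mat (map_mat st M)"

definition tilde_e :: "(complex \<Rightarrow> 'a::ring_1) \<Rightarrow> complex \<Rightarrow> complex \<Rightarrow>
    'a \<Rightarrow> 'a \<Rightarrow> 'a \<Rightarrow> 'a \<Rightarrow> 'a mat" where
  "tilde_e c q s \<xi> \<eta> \<zeta> Z = smult_mat (c (1 / (2 * (1 + s^2)))) (mat_of_rows_list 4
     [[c (1 + s^2) + c 2 * Z, 0, c (1 - s^2) - c 2 * \<zeta>, c 2 * \<xi>],
      [0, c (1 + s^2) + c 2 * Z, - (c 2 * \<eta>), c (s^2 - 1) + c (2 * q^2) * \<zeta>],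
      [c (1 - s^2) - c 2 * \<zeta>, c 2 * \<xi>, c (1 + s^2) - c 2 * Z, 0],
      [- (c 2 * \<eta>), c (s^2 - 1) + c (2 * q^2) * \<zeta>, 0, c (1 + s^2) - c 2 * Z]])"

end

theory Submission
  imports Defs
begin

text \<open>Write T = 1 + s^2. Then e-tilde is M / (2 T) for the block matrix
  M = [[(T + 2 Z) I, X], [X, (T - 2 Z) I]] with X = [[1 - s^2 - 2 \<zeta>, 2 \<xi>], [-2 \<eta>, s^2 - 1 + 2 q^2 \<zeta>]].
  Since T and Z are central, M^2 = 2 T M as soon as X^2 = (T^2 - 4 Z^2) I. The off-diagonal entries
  of X^2 vanish because moving \<xi> or \<eta> past an affine expression in \<zeta> multiplies its
  \<zeta>-coefficient by q^2. By the relations for \<xi> \<eta>, \<eta> \<xi> and Z^2 = U V, the diagonal entries reduce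
  to the polynomial identity (1 - s^2 - 2 t \<zeta>)^2 - 4 (t \<zeta> - 1) (t \<zeta> + s^2) = (1 + s^2)^2
  for t = 1 and t = q^2. For self-adjointness, the involution fixes the real scalars, \<zeta> and Z, and
  exchanges 2 \<xi> and -2 \<eta>, which is exactly what transposing X does.\<close>

definition scalar_block_mat :: "'a::ring_1 \<Rightarrow> 'a \<Rightarrow> 'a \<Rightarrow> 'a \<Rightarrow> 'a \<Rightarrow> 'a \<Rightarrow> 'a mat" where
  "scalar_block_mat T Z a x y b =
     mat_of_rows_list 4 [[T + Z, 0, a, x], [0, T + Z, y, b], [a, x, T - Z, 0], [y, b, 0, T - Z]]"

lemma dim_scalar_block_mat [simp]:
  "dim_row (scalar_block_mat T Z a x y b) = 4" "dim_col (scalar_block_mat T Z a x y b) = 4"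
  by (simp_all add: scalar_block_mat_def mat_of_rows_list_def)

lemma scalar_block_mat_carrier: "scalar_block_mat T Z a x y b \<in> carrier_mat 4 4"
  by (rule carrier_matI) simp_all

lemma tilde_e_scalar_block_mat:
  "tilde_e c q s \<xi> \<eta> \<zeta> Z = smult_mat (c (1 / (2 * (1 + s^2))))
     (scalar_block_mat (c (1 + s^2)) (c 2 * Z) (c (1 - s^2) - c 2 * \<zeta>) (c 2 * \<xi>) (- (c 2 * \<eta>))
       (c (s^2 - 1) + c (2 * q^2) * \<zeta>))"
  unfolding tilde_e_def scalar_block_mat_def ..

lemma less_4_cases: "(i::nat) < 4 \<Longrightarrow> i = 0 \<or> i = 1 \<or> i = 2 \<or> i = 3"
  by auto

lemma sum_lessThan_4: "(\<Sum>k<4::nat. f k) = f 0 + f 1 + f 2 + (f 3 :: 'a::comm_monoid_add)"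
  by (simp add: numeral_eq_Suc add.commute add.left_commute)

text \<open>As T and Z are central, the square is [[(T + Z)^2 I + X^2, 2 T X], [2 T X, (T - Z)^2 I + X^2]],
  so the hypotheses say that X^2 = (T^2 - Z^2) I.\<close>
lemma scalar_block_mat_square:
  fixes T Z a x y b :: "'a::ring_1"
  assumes T: "\<And>w. T * w = w * T" and Z: "\<And>w. Z * w = w * Z"
    and upper_left: "a * a + x * y = T * T - Z * Z"
    and upper_right: "a * x + x * b = 0"
    and lower_left: "y * a + b * y = 0"
    and lower_right: "y * x + b * b = T * T - Z * Z"
  shows "scalar_block_mat T Z a x y b * scalar_block_mat T Z a x y b
       = smult_mat (T + T) (scalar_block_mat T Z a x y b)"
proof (rule eq_matI)
  have x_y: "x * y = T * T - Z * Z - a * a" using upper_left by (simp add: algebra_simps)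
  have x_b: "x * b = - (a * x)" using upper_right by (simp add: add_eq_0_iff)
  have b_y: "b * y = - (y * a)" using lower_left by (simp add: add_eq_0_iff)
  have b_b: "b * b = T * T - Z * Z - y * x" using lower_right by (simp add: algebra_simps)
  fix i j
  assume "i < dim_row (smult_mat (T + T) (scalar_block_mat T Z a x y b))"
    and "j < dim_col (smult_mat (T + T) (scalar_block_mat T Z a x y b))"
  then have "i < 4" "j < 4" by simp_all
  then show "(scalar_block_mat T Z a x y b * scalar_block_mat T Z a x y b) $$ (i, j)
       = smult_mat (T + T) (scalar_block_mat T Z a x y b) $$ (i, j)"
    using less_4_cases[of i] less_4_cases[of j]
    by (auto simp: scalar_block_mat_def mat_of_rows_list_def scalar_prod_def atLeast0LessThan
        sum_lessThan_4 row_def col_def algebra_simps x_y x_b b_y b_b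
        T[of a] T[of x] T[of y] T[of b] T[of Z] Z[of a] Z[of x] Z[of y] Z[of b])
qed simp_all

lemma smult_mat_square_central:
  fixes A :: "'a::ring_1 mat"
  assumes k: "\<And>w. k * w = w * k" and A: "A \<in> carrier_mat n n"
  shows "smult_mat k A * smult_mat k A = smult_mat (k * k) (A * A)"
proof (rule eq_matI)
  have kk: "k * u * (k * v) = k * k * (u * v)" for u v
    by (simp only: mult.assoc k[of "u * v"] k[of v])
  fix i j
  assume "i < dim_row (smult_mat (k * k) (A * A))" "j < dim_col (smult_mat (k * k) (A * A))"
  with A show "(smult_mat k A * smult_mat k A) $$ (i, j) = smult_mat (k * k) (A * A) $$ (i, j)"
    by (simp add: scalar_prod_def row_def col_def kk sum_distrib_left)
qed (use A in simp_all)

lemma smult_smult_mat: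
  "smult_mat k (smult_mat l A) = smult_mat (k * l) (A :: 'a::semigroup_mult mat)"
  by (rule eq_matI) (simp_all add: mult.assoc)

lemma smult_mat_idempotent:
  fixes A :: "'a::ring_1 mat"
  assumes k: "\<And>w. k * w = w * k" and A: "A \<in> carrier_mat n n"
    and square: "A * A = smult_mat t A" and kt: "k * t = 1"
  shows "smult_mat k A * smult_mat k A = smult_mat k A"
  by (simp add: smult_mat_square_central[OF k A] square smult_smult_mat mult.assoc kt)

lemma mat_star_smult_mat:
  assumes "\<And>x. st (k * x) = k' * st x"
  shows "mat_star st (smult_mat k A) = smult_mat k' (mat_star st A)"
  by (rule eq_matI) (simp_all add: mat_star_def assms)

lemma mat_star_scalar_block_mat:
  assumes "additive st"
  shows "mat_star st (scalar_block_mat T Z a x y b)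
       = scalar_block_mat (st T) (st Z) (st a) (st y) (st x) (st b)"
proof (rule eq_matI)
  fix i j assume "i < dim_row (scalar_block_mat (st T) (st Z) (st a) (st y) (st x) (st b))"
    and "j < dim_col (scalar_block_mat (st T) (st Z) (st a) (st y) (st x) (st b))"
  then have "i < 4" "j < 4" by simp_all
  then show "mat_star st (scalar_block_mat T Z a x y b) $$ (i, j)
       = scalar_block_mat (st T) (st Z) (st a) (st y) (st x) (st b) $$ (i, j)"
    using less_4_cases[of i] less_4_cases[of j]
    by (auto simp: mat_star_def scalar_block_mat_def mat_of_rows_list_def
        additive.add[OF assms] additive.diff[OF assms] additive.zero[OF assms])
qed (simp_all add: mat_star_def)

locale complex_scalars =
  fixes c :: "complex \<Rightarrow> 'a::ring_1"
  assumes complex_algebra: "complex_algebra c"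
begin

lemma scalar_add: "c (z + w) = c z + c w"
  and scalar_mult: "c (z * w) = c z * c w"
  and scalar_one: "c 1 = 1"
  and scalar_commute: "c z * x = x * c z"
  using complex_algebra unfolding complex_algebra_def by blast+

sublocale scalar: additive c
  by unfold_locales (rule scalar_add)

lemma mult_scalar_commute: "x * c z = c z * x"
  by (rule scalar_commute[symmetric])

text \<open>The commutation rules loop as unrestricted simp rules (take x = c w), so they are always
  instantiated below.\<close>
lemma scalar_mult_left_commute: "x * (c z * y) = c z * (x * y)"
  by (metis scalar_commute mult.assoc)

lemma scalar_mult_assoc: "c z * (c w * x) = c (z * w) * x"
  by (simp add: scalar_mult mult.assoc)

definition affine :: "'a \<Rightarrow> complex \<Rightarrow> complex \<Rightarrow> 'a" where
  "affine w a0 a1 = c a0 + c a1 * w"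

definition quadratic :: "'a \<Rightarrow> complex \<Rightarrow> complex \<Rightarrow> complex \<Rightarrow> 'a" where
  "quadratic w a0 a1 a2 = c a0 + c a1 * w + c a2 * (w * w)"

lemma affine_add: "affine w a0 a1 + affine w b0 b1 = affine w (a0 + b0) (a1 + b1)"
  by (simp add: affine_def scalar_add algebra_simps)

lemma affine_minus: "- affine w a0 a1 = affine w (- a0) (- a1)"
  by (simp add: affine_def scalar.minus)

lemma affine_zero: "affine w 0 0 = 0"
  by (simp add: affine_def scalar.zero)

lemma affine_mult:
  "affine w a0 a1 * affine w b0 b1 = quadratic w (a0 * b0) (a0 * b1 + a1 * b0) (a1 * b1)"
  by (simp add: affine_def quadratic_def algebra_simps scalar_add scalar_mult_assoc
      scalar_mult_left_commute[of w] mult_scalar_commute[of w] scalar_mult[symmetric] mult.commute)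

lemma quadratic_diff:
  "quadratic w a0 a1 a2 - quadratic w b0 b1 b2 = quadratic w (a0 - b0) (a1 - b1) (a2 - b2)"
  by (simp add: quadratic_def scalar.diff algebra_simps)

lemma scalar_mult_quadratic:
  "c k * quadratic w a0 a1 a2 = quadratic w (k * a0) (k * a1) (k * a2)"
  by (simp add: quadratic_def distrib_left scalar_mult_assoc scalar_mult)

lemma scalar_eq_quadratic: "c k = quadratic w k 0 0"
  by (simp add: quadratic_def scalar.zero)

lemma affine_commute_left:
  assumes "w * u = c r * u * w"
  shows "affine w a0 a1 * u = u * affine w a0 (a1 * r)"
proof -
  have "affine w a0 a1 * u = c a0 * u + c a1 * (w * u)"
    unfolding affine_def distrib_right mult.assoc ..
  also have "\<dots> = c a0 * u + c (a1 * r) * (u * w)"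
    unfolding assms mult.assoc scalar_mult_assoc ..
  also have "\<dots> = u * affine w a0 (a1 * r)"
    unfolding affine_def distrib_left scalar_mult_left_commute[of u] mult_scalar_commute[of u] ..
  finally show ?thesis .
qed

lemma affine_commute_right:
  assumes "u * w = c r * w * u"
  shows "u * affine w a0 a1 = affine w a0 (a1 * r) * u"
proof -
  have "u * affine w a0 a1 = c a0 * u + c a1 * (u * w)"
    unfolding affine_def distrib_left scalar_mult_left_commute[of u] mult_scalar_commute[of u] ..
  also have "\<dots> = c a0 * u + c (a1 * r) * (w * u)"
    unfolding assms mult.assoc scalar_mult_assoc ..
  also have "\<dots> = affine w a0 (a1 * r) * u"
    unfolding affine_def distrib_right mult.assoc ..
  finally show ?thesis .
qed

lemma affine_square_minus_four_product:
  assumes "m = affine w (-1) t * affine w (s^2) t + Z * Z"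
  shows "affine w (1 - s^2) (- 2 * t) * affine w (1 - s^2) (- 2 * t) - c 4 * m
       = c (1 + s^2) * c (1 + s^2) - c 2 * Z * (c 2 * Z)"
proof -
  let ?a = "affine w (1 - s^2) (- 2 * t)" and ?p = "affine w (-1) t * affine w (s^2) t"
  have "?a * ?a - c 4 * ?p = quadratic w ((1 + s^2) * (1 + s^2)) 0 0"
    by (simp add: affine_mult scalar_mult_quadratic quadratic_diff algebra_simps)
  also have "\<dots> = c (1 + s^2) * c (1 + s^2)"
    by (simp add: scalar_eq_quadratic[symmetric] scalar_mult)
  finally have polynomial_identity: "?a * ?a - c 4 * ?p = c (1 + s^2) * c (1 + s^2)" .
  have "c 2 * Z * (c 2 * Z) = c 4 * (Z * Z)"
    by (simp add: mult.assoc scalar_mult_left_commute[of Z] scalar_mult_assoc)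
  moreover have "?a * ?a - c 4 * m = (?a * ?a - c 4 * ?p) - c 4 * (Z * Z)"
    by (simp add: assms distrib_left)
  ultimately show ?thesis
    by (simp only: polynomial_identity)
qed

lemma tilde_block_square_upper_left:
  assumes "\<xi> * \<eta> = (\<zeta> - 1) * (\<zeta> + c (s^2)) + Z * Z"
  shows "(c (1 - s^2) - c 2 * \<zeta>) * (c (1 - s^2) - c 2 * \<zeta>) + c 2 * \<xi> * - (c 2 * \<eta>)
       = c (1 + s^2) * c (1 + s^2) - c 2 * Z * (c 2 * Z)"
proof -
  have "c (1 - s^2) - c 2 * \<zeta> = affine \<zeta> (1 - s^2) (- 2 * 1)"
    by (simp add: affine_def scalar.minus)
  moreover have "c 2 * \<xi> * - (c 2 * \<eta>) = - (c 4 * (\<xi> * \<eta>))"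
    by (simp add: mult.assoc scalar_mult_left_commute[of \<xi>] scalar_mult_assoc)
  moreover have "\<xi> * \<eta> = affine \<zeta> (-1) 1 * affine \<zeta> (s^2) 1 + Z * Z"
    using assms by (simp add: affine_def scalar.minus scalar_one add.commute)
  ultimately show ?thesis
    using affine_square_minus_four_product[of "\<xi> * \<eta>" \<zeta> 1 s Z] by simp
qed

lemma tilde_block_square_lower_right:
  assumes "\<eta> * \<xi> = (c (q^2) * \<zeta> - 1) * (c (q^2) * \<zeta> + c (s^2)) + Z * Z"
  shows "- (c 2 * \<eta>) * (c 2 * \<xi>)
         + (c (s^2 - 1) + c (2 * q^2) * \<zeta>) * (c (s^2 - 1) + c (2 * q^2) * \<zeta>)
       = c (1 + s^2) * c (1 + s^2) - c 2 * Z * (c 2 * Z)"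
proof -
  have "c (s^2 - 1) + c (2 * q^2) * \<zeta> = - affine \<zeta> (1 - s^2) (- 2 * q^2)"
    unfolding affine_minus by (simp add: affine_def)
  moreover have "- (c 2 * \<eta>) * (c 2 * \<xi>) = - (c 4 * (\<eta> * \<xi>))"
    by (simp add: mult.assoc scalar_mult_left_commute[of \<eta>] scalar_mult_assoc)
  moreover have "\<eta> * \<xi> = affine \<zeta> (-1) (q^2) * affine \<zeta> (s^2) (q^2) + Z * Z"
    using assms by (simp add: affine_def scalar.minus scalar_one add.commute)
  ultimately show ?thesis
    using affine_square_minus_four_product[of "\<eta> * \<xi>" \<zeta> "q^2" s Z] by simp
qed

lemma tilde_block_square_upper_right:
  assumes "\<zeta> * \<xi> = c (q^2) * \<xi> * \<zeta>"
  shows "(c (1 - s^2) - c 2 * \<zeta>) * (c 2 * \<xi>)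
         + c 2 * \<xi> * (c (s^2 - 1) + c (2 * q^2) * \<zeta>) = 0"
proof -
  let ?a = "affine \<zeta> (1 - s^2) (-2)" and ?b = "affine \<zeta> (s^2 - 1) (2 * q^2)"
  have "?a * (c 2 * \<xi>) + c 2 * \<xi> * ?b = c 2 * (?a * \<xi>) + c 2 * (\<xi> * ?b)"
    by (simp only: scalar_mult_left_commute[of ?a] mult.assoc)
  also have "\<dots> = c 2 * (\<xi> * (affine \<zeta> (1 - s^2) (- 2 * q^2) + ?b))"
    by (simp only: affine_commute_left[OF assms] distrib_left)
  also have "\<dots> = 0"
    by (simp add: affine_add affine_zero)
  finally have "?a * (c 2 * \<xi>) + c 2 * \<xi> * ?b = 0" .
  moreover have "c (1 - s^2) - c 2 * \<zeta> = ?a" "c (s^2 - 1) + c (2 * q^2) * \<zeta> = ?b"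
    by (simp_all add: affine_def scalar.minus)
  ultimately show ?thesis
    by simp
qed

lemma tilde_block_square_lower_left:
  assumes "\<eta> * \<zeta> = c (q^2) * \<zeta> * \<eta>"
  shows "- (c 2 * \<eta>) * (c (1 - s^2) - c 2 * \<zeta>)
         + (c (s^2 - 1) + c (2 * q^2) * \<zeta>) * - (c 2 * \<eta>) = 0"
proof -
  let ?a = "affine \<zeta> (1 - s^2) (-2)" and ?b = "affine \<zeta> (s^2 - 1) (2 * q^2)"
  have "- (c 2 * \<eta>) * ?a + ?b * - (c 2 * \<eta>) = - (c 2 * (\<eta> * ?a) + c 2 * (?b * \<eta>))"
    by (simp only: mult_minus_left mult_minus_right minus_add_distrib scalar_mult_left_commute[of ?b]
        mult.assoc)
  also have "\<dots> = - (c 2 * ((affine \<zeta> (1 - s^2) (- 2 * q^2) + ?b) * \<eta>))"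
    by (simp only: affine_commute_right[OF assms] distrib_right distrib_left)
  also have "\<dots> = 0"
    by (simp add: affine_add affine_zero)
  finally have "- (c 2 * \<eta>) * ?a + ?b * - (c 2 * \<eta>) = 0" .
  moreover have "c (1 - s^2) - c 2 * \<zeta> = ?a" "c (s^2 - 1) + c (2 * q^2) * \<zeta> = ?b"
    by (simp_all add: affine_def scalar.minus)
  ultimately show ?thesis
    by simp
qed

lemma tilde_e_idempotent:
  assumes s: "s^2 \<noteq> -1"
    and \<zeta>_\<xi>: "\<zeta> * \<xi> = c (q^2) * \<xi> * \<zeta>" and \<eta>_\<zeta>: "\<eta> * \<zeta> = c (q^2) * \<zeta> * \<eta>"
    and \<xi>_\<eta>: "\<xi> * \<eta> = (\<zeta> - 1) * (\<zeta> + c (s^2)) + Z * Z"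
    and \<eta>_\<xi>: "\<eta> * \<xi> = (c (q^2) * \<zeta> - 1) * (c (q^2) * \<zeta> + c (s^2)) + Z * Z"
    and Z: "\<And>x. Z * x = x * Z"
  shows "tilde_e c q s \<xi> \<eta> \<zeta> Z * tilde_e c q s \<xi> \<eta> \<zeta> Z = tilde_e c q s \<xi> \<eta> \<zeta> Z"
proof -
  let ?T = "c (1 + s^2)" and ?Z = "c 2 * Z"
  let ?M = "scalar_block_mat ?T ?Z (c (1 - s^2) - c 2 * \<zeta>) (c 2 * \<xi>) (- (c 2 * \<eta>))
    (c (s^2 - 1) + c (2 * q^2) * \<zeta>)"
  have "?Z * x = x * ?Z" for x
    by (simp only: mult.assoc Z[of x] scalar_mult_left_commute[of x])
  then have "?M * ?M = smult_mat (?T + ?T) ?M"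
    by (intro scalar_block_mat_square scalar_commute
        tilde_block_square_upper_left[OF \<xi>_\<eta>] tilde_block_square_upper_right[OF \<zeta>_\<xi>]
        tilde_block_square_lower_left[OF \<eta>_\<zeta>] tilde_block_square_lower_right[OF \<eta>_\<xi>])
  moreover have "1 / (2 * (1 + s^2)) * ((1 + s^2) + (1 + s^2)) = 1"
    using s by (simp add: field_simps add_eq_0_iff)
  then have "c (1 / (2 * (1 + s^2))) * (?T + ?T) = 1"
    by (simp only: scalar_mult[symmetric] scalar_add[symmetric] scalar_one)
  ultimately show ?thesis
    unfolding tilde_e_scalar_block_mat
    by (rule smult_mat_idempotent[OF scalar_commute scalar_block_mat_carrier])
qed

end

locale complex_star_algebra = complex_scalars c for c :: "complex \<Rightarrow> 'a::ring_1" +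
  fixes st :: "'a \<Rightarrow> 'a"
  assumes involution: "algebra_involution c st"
begin

lemma star_add: "st (x + y) = st x + st y"
  and star_mult: "st (x * y) = st y * st x"
  and star_star: "st (st x) = x"
  and star_scalar_mult: "st (c z * x) = c (cnj z) * st x"
  using involution unfolding algebra_involution_def by blast+

sublocale star: additive st
  by unfold_locales (rule star_add)

lemma star_one: "st 1 = 1"
  using star_mult[of "st 1" 1] by (simp add: star_star)

lemma star_scalar: "st (c z) = c (cnj z)"
  using star_scalar_mult[of z 1] by (simp add: star_one)

lemma tilde_e_self_adjoint:
  assumes q: "q^2 \<in> \<real>" and s: "s^2 \<in> \<real>"
    and \<zeta>: "st \<zeta> = \<zeta>" and \<xi>: "st \<xi> = - \<eta>" and Z: "st Z = Z"
  shows "mat_star st (tilde_e c q s \<xi> \<eta> \<zeta> Z) = tilde_e c q s \<xi> \<eta> \<zeta> Z"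
proof -
  have \<eta>: "st \<eta> = - \<xi>"
    using arg_cong[OF \<xi>, of st] by (simp add: star_star star.minus)
  have "cnj q ^ 2 = q ^ 2" "cnj s ^ 2 = s ^ 2"
    using q s by (simp_all add: Reals_cnj_iff flip: complex_cnj_power)
  then show ?thesis
    unfolding tilde_e_scalar_block_mat
      mat_star_smult_mat[where st = st and k = "c (1 / (2 * (1 + s^2)))", OF star_scalar_mult]
      mat_star_scalar_block_mat[OF star.additive_axioms]
    by (simp add: star.add star.diff star.minus star_scalar_mult star_scalar \<zeta> \<xi> \<eta> Z)
qed

end

theorem mainTheorem3:
  fixes c :: "complex \<Rightarrow> 'a::ring_1"
    and p q s :: complex
    and \<xi> \<eta> \<zeta> U V Z :: 'a
  assumes alg: "complex_algebra c"
    and p0: "p \<noteq> 0" and q0: "q \<noteq> 0" and s0: "s^2 \<noteq> -1"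
    and r1: "\<zeta> * \<xi> = c (q^2) * \<xi> * \<zeta>"
    and r2: "\<eta> * \<zeta> = c (q^2) * \<zeta> * \<eta>"
    and r3: "\<xi> * U = c p * U * \<xi>"
    and r4: "V * \<xi> = c p * \<xi> * V"
    and r5: "\<eta> * V = c p * V * \<eta>"
    and r6: "U * \<eta> = c p * \<eta> * U"
    and r7: "U * V = V * U"
    and r8: "U * \<zeta> = \<zeta> * U"
    and r9: "V * \<zeta> = \<zeta> * V"
    and r10: "\<xi> * \<eta> = (\<zeta> - 1) * (\<zeta> + c (s^2)) + U * V"
    and r11: "\<eta> * \<xi> = (c (q^2) * \<zeta> - 1) * (c (q^2) * \<zeta> + c (s^2)) + U * V"
    and Zc: "\<forall>x. Z * x = x * Z"
    and Z2: "Z^2 = U * V"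
  shows "tilde_e c q s \<xi> \<eta> \<zeta> Z * tilde_e c q s \<xi> \<eta> \<zeta> Z = tilde_e c q s \<xi> \<eta> \<zeta> Z \<and>
    (\<forall>st. (q^2 \<in> \<real> \<and> s^2 \<in> \<real> \<and> cmod p = 1 \<and> algebra_involution c st \<and>
          st \<zeta> = \<zeta> \<and> st \<xi> = - \<eta> \<and> st U = V \<and> st Z = Z)
      \<longrightarrow> mat_star st (tilde_e c q s \<xi> \<eta> \<zeta> Z) = tilde_e c q s \<xi> \<eta> \<zeta> Z)"
proof (intro conjI allI impI)
  interpret complex_scalars c
    using alg by unfold_locales
  have "U * V = Z * Z"
    using Z2 by (simp add: power2_eq_square)
  with r10 r11 have "\<xi> * \<eta> = (\<zeta> - 1) * (\<zeta> + c (s^2)) + Z * Z"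
    and "\<eta> * \<xi> = (c (q^2) * \<zeta> - 1) * (c (q^2) * \<zeta> + c (s^2)) + Z * Z"
    by simp_all
  with Zc show "tilde_e c q s \<xi> \<eta> \<zeta> Z * tilde_e c q s \<xi> \<eta> \<zeta> Z = tilde_e c q s \<xi> \<eta> \<zeta> Z"
    by (intro tilde_e_idempotent[OF s0 r1 r2]) blast+
next
  fix st
  assume H: "q^2 \<in> \<real> \<and> s^2 \<in> \<real> \<and> cmod p = 1 \<and> algebra_involution c st \<and>
    st \<zeta> = \<zeta> \<and> st \<xi> = - \<eta> \<and> st U = V \<and> st Z = Z"
  then have "algebra_involution c st"
    by blast
  with alg interpret complex_star_algebra c st
    by (intro complex_star_algebra.intro complex_scalars.intro complex_star_algebra_axioms.intro)
  from H show "mat_star st (tilde_e c q s \<xi> \<eta> \<zeta> Z) = tilde_e c q s \<xi> \<eta> \<zeta> Z"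
    by (intro tilde_e_self_adjoint) blast+
qed

end
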